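(* Let $r>0$ and $s$ be real numbers. Let $e_0,e_1,e_2,\dots$ be independent and identically distributed real random variables with cumulative distribution function $F$ having probability density function $f$ with respect to Lebesgue measure. Let $X_0$ be a real random variable such that $(X_0,e_0)$ is independent of $(e_1,e_2,\dots)$, and define the ARMA(1,1) process $X_i - rX_{i-1} = e_i + s e_{i-1}$ for $i\ge 1$. Fix $x\in\mathbb{R}$, put $M_0=-\infty$ and $M_n=\max_{1\le i\le n}X_i$ for $n\ge1$, and for $\mathbf{y}=(y_0,y_1)\in\mathbb{R}^2$ and $n\ge 0$ define $$G_n(\mathbf{y}) = P(M_n\le x,\ X_n\le y_0,\ e_n\le y_1),$$ so that $G_0(\mathbf{y})=P(X_0\le y_0,\ e_0\le y_1)$. Define the linear integral operator $\mathcal{K}$ (depending on $x$) acting on functions $h$ of $\mathbf{z}=(z_0,z_1)\in\mathbb{R}^2$ by $$\mathcal{K}h(\mathbf{y}) = r\int\int_{a_{\mathbf{y}\mathbf{z}}}^{\infty} dz_0\, f(y_{0x}-rz_0-sz_1)\, h(z_0,dz_1),$$ where $y_{0x}=\min(y_0,x)$, $a_{\mathbf{y}\mathbf{z}}=(y_{0x}-sz_1-y_1)/r$, and $h(z_0,dz_1)$ denotes Lebesgue--Stieltjes integration with respect to the second argument $z_1$ of $h$. Then for every $n\ge 1$ and every $\mathbf{y}\in\mathbb{R}^2$, $$G_n(\mathbf{y}) = \mathcal{K}G_{n-1}(\mathbf{y}).$$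
   Context: All notation is introduced in the claim. The dependence of $G_n$ and $\mathcal{K}$ on the fixed level $x$ is suppressed. *)

theory Defs
  imports "HOL-Probability.Probability"
begin

definition run_max :: "(nat \<Rightarrow> 'a \<Rightarrow> real) \<Rightarrow> nat \<Rightarrow> 'a \<Rightarrow> ereal" where
  "run_max X n \<omega> = (if n = 0 then -\<infinity> else Max ((\<lambda>i. ereal (X i \<omega>)) ` {1..n}))"

definition Gfun :: "'a measure \<Rightarrow> (nat \<Rightarrow> 'a \<Rightarrow> real) \<Rightarrow> (nat \<Rightarrow> 'a \<Rightarrow> real) \<Rightarrow> real
    \<Rightarrow> nat \<Rightarrow> real \<Rightarrow> real \<Rightarrow> real" where
  "Gfun M X e x n y0 y1 =
     measure M {\<omega> \<in> space M. run_max X n \<omega> \<le> ereal x \<and> X n \<omega> \<le> y0 \<and> e n \<omega> \<le> y1}"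

text \<open>The integral operator K: the inner integral is the Lebesgue--Stieltjes integral
  in z1 with respect to the function h(z0, .), the outer one is Lebesgue integration in z0
  over [a_{yz}, infinity).\<close>
definition Kop :: "real \<Rightarrow> real \<Rightarrow> (real \<Rightarrow> real) \<Rightarrow> real \<Rightarrow> (real \<Rightarrow> real \<Rightarrow> real)
    \<Rightarrow> real \<Rightarrow> real \<Rightarrow> real" where
  "Kop r s f x h y0 y1 =
     r * (LINT z0|lborel. LINT z1|interval_measure (\<lambda>t. h z0 t).
            (if (min y0 x - s * z1 - y1) / r \<le> z0 then f (min y0 x - r * z0 - s * z1) else 0))"

end

(*
  Write n = m + 1. By the recursion X_n = r X_m + e_n + s e_m, the event
  {M_n <= x, X_n <= y_0, e_n <= y_1} is {M_m <= x, e_n <= min y_1 (min y_0 x - r X_m - s e_m)}.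
  Apart from e_n, this only involves the past ((X_0, e_0), e_1, ..., e_m), of which every X_i with
  i <= m is a measurable function and which is independent of e_n. Integrating e_n against its
  density f and substituting e_n = min y_0 x - s e_m - r z_0 turns the probability into
  r * int dz_0 E[1{M_m <= x, X_m <= z_0} k(z_0, e_m)]. For fixed z_0 the restriction of the law of
  e_m to {M_m <= x, X_m <= z_0} has distribution function G_m(z_0, .), so the inner expectation is
  the Lebesgue-Stieltjes integral in the definition of K.
*)

theory Submission
  imports Defs
begin

lemma interval_measure_cdf:
  assumes "finite_borel_measure N"
  shows "interval_measure (cdf N) = N"
proof -
  interpret finite_borel_measure N by fact
  show ?thesis
  proof (rule measure_eqI_generator_eq[where \<Omega>=UNIV and E="range (\<lambda>(a, b). {a<..b::real})"
        and A="\<lambda>i. {- real (i::nat)<..real i}"])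
    fix X assume "X \<in> range (\<lambda>(a, b). {a<..b::real})"
    then obtain a b where "X = {a<..b}" by auto
    then show "emeasure (interval_measure (cdf N)) X = emeasure N X"
      by (cases "a \<le> b")
         (simp_all add: emeasure_Ioc emeasure_interval_measure_Ioc cdf_nondecreasing cdf_is_right_cont)
  next
    show "(\<Union>i. {- real (i::nat)<..real i}) = UNIV"
      by (rule UN_Ioc_eq_UNIV)
  next
    fix i :: nat show "emeasure (interval_measure (cdf N)) {- real i<..real i} \<noteq> \<infinity>"
      by (simp add: emeasure_interval_measure_Ioc cdf_nondecreasing cdf_is_right_cont)
  qed (auto simp: M_is_borel borel_sigma_sets_Ioc Int_stable_def)
qed

lemma (in finite_measure) nn_integral_indicator_eq_interval_measure:
  assumes [measurable]: "S \<in> sets M" "Y \<in> borel_measurable M" "k \<in> borel_measurable borel"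
  shows "(\<integral>\<^sup>+\<omega>. indicator S \<omega> * k (Y \<omega>) \<partial>M)
       = (\<integral>\<^sup>+t. k t \<partial>interval_measure (\<lambda>t. measure M {\<omega> \<in> space M. \<omega> \<in> S \<and> Y \<omega> \<le> t}))"
proof -
  let ?MS = "density M (indicator S)"
  have Y_MS: "Y \<in> borel_measurable ?MS"
    by (subst measurable_cong_sets[OF sets_density refl]) simp
  interpret MS: finite_measure ?MS
    by (rule finite_measure_restricted) simp
  have "finite_borel_measure (distr ?MS borel Y)"
    by (simp add: finite_borel_measure_def finite_borel_measure_axioms_def MS.finite_measure_distr[OF Y_MS])
  moreover have "cdf (distr ?MS borel Y) = (\<lambda>t. measure M {\<omega> \<in> space M. \<omega> \<in> S \<and> Y \<omega> \<le> t})"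
  proof
    fix t
    have "cdf (distr ?MS borel Y) t = measure ?MS (Y -` {..t} \<inter> space M)"
      unfolding cdf_def by (subst measure_distr[OF Y_MS]) auto
    also have "\<dots> = measure M (S \<inter> (Y -` {..t} \<inter> space M))"
      by (subst measure_restricted) auto
    also have "S \<inter> (Y -` {..t} \<inter> space M) = {\<omega> \<in> space M. \<omega> \<in> S \<and> Y \<omega> \<le> t}"
      by auto
    finally show "cdf (distr ?MS borel Y) t = measure M {\<omega> \<in> space M. \<omega> \<in> S \<and> Y \<omega> \<le> t}" .
  qed
  ultimately have "distr ?MS borel Y = interval_measure (\<lambda>t. measure M {\<omega> \<in> space M. \<omega> \<in> S \<and> Y \<omega> \<le> t})"
    using interval_measure_cdf by metis
  moreover have "(\<integral>\<^sup>+\<omega>. indicator S \<omega> * k (Y \<omega>) \<partial>M) = (\<integral>\<^sup>+t. k t \<partial>distr ?MS borel Y)"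
    by (simp add: nn_integral_distr[OF Y_MS] nn_integral_density)
  ultimately show ?thesis by simp
qed

lemma nn_integral_atMost_reflect:
  fixes f :: "real \<Rightarrow> ennreal" and r :: real
  assumes [measurable]: "f \<in> borel_measurable borel" and "r > 0"
  shows "(\<integral>\<^sup>+t. f t * indicator {..c} t \<partial>lborel)
       = r * (\<integral>\<^sup>+z. f (b - r * z) * indicator {(b - c) / r..} z \<partial>lborel)"
proof -
  have "(\<integral>\<^sup>+t. f t * indicator {..c} t \<partial>lborel)
      = \<bar>- r\<bar> * (\<integral>\<^sup>+z. f (b + - r * z) * indicator {..c} (b + - r * z) \<partial>lborel)"
    using \<open>r > 0\<close> by (intro nn_integral_real_affine) auto
  also have "(\<lambda>z. indicator {..c} (b + - r * z) :: ennreal) = indicator {(b - c) / r..}"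
    using \<open>r > 0\<close> by (auto simp: indicator_def field_simps fun_eq_iff)
  finally show ?thesis
    using \<open>r > 0\<close> by simp
qed

lemma (in prob_space) indep_set_mono:
  assumes "indep_set A B" "A' \<subseteq> A" "B' \<subseteq> B"
  shows "indep_set A' B'"
  using assms indep_setD_ev1[OF assms(1)] indep_setD_ev2[OF assms(1)]
  by (intro indep_setI) (auto intro: indep_setD)

text \<open>The library's \<open>indep_var\<close> needs both random variables to take values in the same type;
  \<open>indep_rv\<close> is the same notion for random variables with values in different spaces.\<close>

definition (in prob_space) indep_rv :: "'b measure \<Rightarrow> ('a \<Rightarrow> 'b) \<Rightarrow> 'c measure \<Rightarrow> ('a \<Rightarrow> 'c) \<Rightarrow> bool"
  where "indep_rv Ma A Mb B \<longleftrightarrow> A \<in> measurable M Ma \<and> B \<in> measurable M Mb \<and>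
    indep_set (sets (vimage_algebra (space M) A Ma)) (sets (vimage_algebra (space M) B Mb))"

lemma (in prob_space) indep_rv_iff_indep_var: "indep_rv Ma A Mb B \<longleftrightarrow> indep_var Ma A Mb B"
  by (simp add: indep_rv_def indep_var_eq sets_vimage_algebra)

lemma (in prob_space) indep_rvD:
  assumes "indep_rv Ma A Mb B" "S \<in> sets Ma" "T \<in> sets Mb"
  shows "prob (A -` S \<inter> B -` T \<inter> space M) = prob (A -` S \<inter> space M) * prob (B -` T \<inter> space M)"
proof -
  have "prob ((A -` S \<inter> space M) \<inter> (B -` T \<inter> space M)) = prob (A -` S \<inter> space M) * prob (B -` T \<inter> space M)"
    using assms unfolding indep_rv_def by (intro indep_setD) (auto intro: in_vimage_algebra)
  then show ?thesis
    by (simp add: Int_ac)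
qed

lemma (in prob_space) indep_rv_compose:
  assumes indep: "indep_rv Ma A Mb B"
    and [measurable]: "f \<in> measurable Ma Na" "g \<in> measurable Mb Nb"
  shows "indep_rv Na (\<lambda>\<omega>. f (A \<omega>)) Nb (\<lambda>\<omega>. g (B \<omega>))"
proof -
  have [measurable]: "A \<in> measurable M Ma" "B \<in> measurable M Mb"
    using indep by (auto simp: indep_rv_def)
  have "sets (vimage_algebra (space M) (\<lambda>\<omega>. f (A \<omega>)) Na) \<subseteq> sets (vimage_algebra (space M) A Ma)"
    using measurable_space[of A M Ma]
    by (intro sets_image_in_sets measurable_compose[OF measurable_vimage_algebra1, of _ _ _ f]) auto
  moreover have "sets (vimage_algebra (space M) (\<lambda>\<omega>. g (B \<omega>)) Nb) \<subseteq> sets (vimage_algebra (space M) B Mb)"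
    using measurable_space[of B M Mb]
    by (intro sets_image_in_sets measurable_compose[OF measurable_vimage_algebra1, of _ _ _ g]) auto
  ultimately show ?thesis
    using indep unfolding indep_rv_def by (auto intro: indep_set_mono)
qed

lemma (in prob_space) distr_pair_eq_pair_measure:
  assumes "indep_rv Ma A Mb B"
  shows "distr M (Ma \<Otimes>\<^sub>M Mb) (\<lambda>\<omega>. (A \<omega>, B \<omega>)) = distr M Ma A \<Otimes>\<^sub>M distr M Mb B"
proof (rule pair_measure_eqI[symmetric])
  have [measurable]: "A \<in> measurable M Ma" "B \<in> measurable M Mb"
    using assms by (auto simp: indep_rv_def)
  show "sigma_finite_measure (distr M Ma A)" "sigma_finite_measure (distr M Mb B)"
    by (auto intro!: prob_space_imp_sigma_finite prob_space_distr)
  fix S T assume "S \<in> sets (distr M Ma A)" "T \<in> sets (distr M Mb B)"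
  then have [measurable]: "S \<in> sets Ma" "T \<in> sets Mb"
    by auto
  have "(\<lambda>\<omega>. (A \<omega>, B \<omega>)) -` (S \<times> T) \<inter> space M = A -` S \<inter> B -` T \<inter> space M"
    by auto
  then show "emeasure (distr M Ma A) S * emeasure (distr M Mb B) T
      = emeasure (distr M (Ma \<Otimes>\<^sub>M Mb) (\<lambda>\<omega>. (A \<omega>, B \<omega>))) (S \<times> T)"
    using indep_rvD[OF assms, of S T]
    by (simp add: emeasure_distr emeasure_eq_measure ennreal_mult')
qed simp

lemma (in prob_space) nn_integral_indep_density:
  fixes f :: "real \<Rightarrow> ennreal"
  assumes indep: "indep_rv N V borel E"
    and E: "distributed M lborel E f"
    and [measurable]: "g \<in> borel_measurable (N \<Otimes>\<^sub>M borel)"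
  shows "(\<integral>\<^sup>+\<omega>. g (V \<omega>, E \<omega>) \<partial>M) = (\<integral>\<^sup>+\<omega>. \<integral>\<^sup>+t. f t * g (V \<omega>, t) \<partial>lborel \<partial>M)"
proof -
  have [measurable]: "V \<in> measurable M N" "E \<in> borel_measurable M"
    using indep by (auto simp: indep_rv_def)
  have [measurable]: "f \<in> borel_measurable borel"
    using E by (simp add: distributed_def)
  interpret V: prob_space "distr M N V" by (rule prob_space_distr) simp
  interpret E: prob_space "distr M borel E" by (rule prob_space_distr) simp
  interpret VE: pair_prob_space "distr M N V" "distr M borel E" ..
  have "distr M borel E = distr M lborel E"
    by (rule distr_cong) auto
  then have distr_E: "distr M borel E = density lborel f"
    using E by (simp add: distributed_def)
  have "(\<integral>\<^sup>+\<omega>. g (V \<omega>, E \<omega>) \<partial>M) = (\<integral>\<^sup>+p. g p \<partial>distr M (N \<Otimes>\<^sub>M borel) (\<lambda>\<omega>. (V \<omega>, E \<omega>)))"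
    by (simp add: nn_integral_distr)
  also have "\<dots> = (\<integral>\<^sup>+p. g p \<partial>(distr M N V \<Otimes>\<^sub>M distr M borel E))"
    by (simp add: distr_pair_eq_pair_measure[OF indep])
  also have "\<dots> = (\<integral>\<^sup>+v. \<integral>\<^sup>+t. g (v, t) \<partial>distr M borel E \<partial>distr M N V)"
    by (subst E.nn_integral_fst) (auto cong: measurable_cong_sets)
  also have "\<dots> = (\<integral>\<^sup>+v. \<integral>\<^sup>+t. f t * g (v, t) \<partial>lborel \<partial>distr M N V)"
    unfolding distr_E by (intro nn_integral_cong, subst nn_integral_density) auto
  also have "\<dots> = (\<integral>\<^sup>+\<omega>. \<integral>\<^sup>+t. f t * g (V \<omega>, t) \<partial>lborel \<partial>M)"
    by (simp add: nn_integral_distr)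
  finally show ?thesis .
qed

lemma (in prob_space) indep_rv_pair_assoc:
  assumes A_BC: "indep_rv Ma A (Mb \<Otimes>\<^sub>M Mc) (\<lambda>\<omega>. (B \<omega>, C \<omega>))"
    and B_C: "indep_rv Mb B Mc C"
  shows "indep_rv (Ma \<Otimes>\<^sub>M Mb) (\<lambda>\<omega>. (A \<omega>, B \<omega>)) Mc C"
proof -
  have [measurable]: "A \<in> measurable M Ma" "B \<in> measurable M Mb" "C \<in> measurable M Mc"
    using A_BC B_C by (auto simp: indep_rv_def)
  define P where "P = {A -` S \<inter> B -` T \<inter> space M | S T. S \<in> sets Ma \<and> T \<in> sets Mb}"
  define Q where "Q = {C -` U \<inter> space M | U. U \<in> sets Mc}"
  have P_events: "P \<subseteq> events"
    unfolding P_def by auto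
  have "indep_set P Q"
  proof (rule indep_setI)
    fix p q assume "p \<in> P" "q \<in> Q"
    then obtain S T U where [measurable]: "S \<in> sets Ma" "T \<in> sets Mb" "U \<in> sets Mc"
      and pq: "p = A -` S \<inter> B -` T \<inter> space M" "q = C -` U \<inter> space M"
      unfolding P_def Q_def by auto
    have BC_vimage: "(\<lambda>\<omega>. (B \<omega>, C \<omega>)) -` (T \<times> V) \<inter> space M = B -` T \<inter> C -` V \<inter> space M" for V
      by auto
    have "prob p = prob (A -` S \<inter> (\<lambda>\<omega>. (B \<omega>, C \<omega>)) -` (T \<times> space Mc) \<inter> space M)"
      unfolding pq using measurable_space[of C M Mc] by (intro arg_cong[where f=prob]) auto
    also have "\<dots> = prob (A -` S \<inter> space M) * prob (B -` T \<inter> space M)"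
      using measurable_space[of C M Mc]
      by (simp add: indep_rvD[OF A_BC] BC_vimage) (intro disjI2 arg_cong[where f=prob]; auto)
    finally have p_prob: "prob p = prob (A -` S \<inter> space M) * prob (B -` T \<inter> space M)" .
    have "prob (p \<inter> q) = prob (A -` S \<inter> (\<lambda>\<omega>. (B \<omega>, C \<omega>)) -` (T \<times> U) \<inter> space M)"
      unfolding pq by (intro arg_cong[where f=prob]) auto
    also have "\<dots> = prob p * prob q"
      by (simp add: indep_rvD[OF A_BC] BC_vimage indep_rvD[OF B_C] pq(2) p_prob)
    finally show "prob (p \<inter> q) = prob p * prob q" .
  qed (use P_events in \<open>auto simp: Q_def\<close>)
  moreover have "Int_stable P"
  proof (rule Int_stableI)
    fix p p' assume "p \<in> P" "p' \<in> P"
    then obtain S T S' T' where "S \<in> sets Ma" "T \<in> sets Mb" "S' \<in> sets Ma" "T' \<in> sets Mb"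
      "p = A -` S \<inter> B -` T \<inter> space M" "p' = A -` S' \<inter> B -` T' \<inter> space M"
      unfolding P_def by auto
    then show "p \<inter> p' \<in> P"
      unfolding P_def by (intro CollectI exI[of _ "S \<inter> S'"] exI[of _ "T \<inter> T'"]) auto
  qed
  moreover have "Int_stable Q"
  proof (rule Int_stableI)
    fix q q' assume "q \<in> Q" "q' \<in> Q"
    then obtain U U' where "U \<in> sets Mc" "U' \<in> sets Mc" "q = C -` U \<inter> space M" "q' = C -` U' \<inter> space M"
      unfolding Q_def by auto
    then show "q \<inter> q' \<in> Q"
      unfolding Q_def by (intro CollectI exI[of _ "U \<inter> U'"]) auto
  qed
  ultimately have indep_sigma: "indep_set (sigma_sets (space M) P) (sigma_sets (space M) Q)"
    by (rule indep_set_sigma_sets)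
  have P_space: "P \<subseteq> Pow (space M)"
    using P_events sets.sets_into_space by auto
  have "(\<lambda>\<omega>. (A \<omega>, B \<omega>)) \<in> measurable (sigma (space M) P) (Ma \<Otimes>\<^sub>M Mb)"
  proof (rule measurable_Pair)
    have "A -` S \<inter> space M \<in> P" if "S \<in> sets Ma" for S
      unfolding P_def using that measurable_space[of B M Mb]
      by (intro CollectI exI[of _ S] exI[of _ "space Mb"]) auto
    then show "A \<in> measurable (sigma (space M) P) Ma"
      using P_space measurable_space[of A M Ma] by (intro measurableI) (auto simp: sets_measure_of)
    have "B -` T \<inter> space M \<in> P" if "T \<in> sets Mb" for T
      unfolding P_def using that measurable_space[of A M Ma]
      by (intro CollectI exI[of _ "space Ma"] exI[of _ T]) auto
    then show "B \<in> measurable (sigma (space M) P) Mb"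
      using P_space measurable_space[of B M Mb] by (intro measurableI) (auto simp: sets_measure_of)
  qed
  then have "sets (vimage_algebra (space M) (\<lambda>\<omega>. (A \<omega>, B \<omega>)) (Ma \<Otimes>\<^sub>M Mb)) \<subseteq> sets (sigma (space M) P)"
    by (rule sets_image_in_sets[rotated]) (simp add: space_measure_of[OF P_space])
  also have "\<dots> = sigma_sets (space M) P"
    by (rule sets_measure_of[OF P_space])
  moreover have "sets (vimage_algebra (space M) C Mc) = sigma_sets (space M) Q"
    by (simp add: sets_vimage_algebra Q_def)
  ultimately have "indep_set (sets (vimage_algebra (space M) (\<lambda>\<omega>. (A \<omega>, B \<omega>)) (Ma \<Otimes>\<^sub>M Mb)))
      (sets (vimage_algebra (space M) C Mc))"
    by (intro indep_set_mono[OF indep_sigma]) auto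
  then show ?thesis
    unfolding indep_rv_def by simp
qed

lemma run_max_le_iff: "run_max X n \<omega> \<le> ereal x \<longleftrightarrow> (\<forall>i\<in>{1..n}. X i \<omega> \<le> x)"
  by (cases "n = 0") (auto simp: run_max_def)

lemma integral_enn2real:
  assumes [measurable]: "g \<in> borel_measurable N" and "(\<integral>\<^sup>+z. g z \<partial>N) \<noteq> \<infinity>"
  shows "(\<integral>z. enn2real (g z) \<partial>N) = enn2real (\<integral>\<^sup>+z. g z \<partial>N)"
proof -
  have "AE z in N. ennreal (enn2real (g z)) = g z"
    using nn_integral_PInf_AE[OF assms] by eventually_elim (simp add: ennreal_enn2real_if)
  then have "(\<integral>\<^sup>+z. ennreal (enn2real (g z)) \<partial>N) = (\<integral>\<^sup>+z. g z \<partial>N)"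
    by (rule nn_integral_cong_AE)
  then show ?thesis
    by (subst integral_eq_nn_integral) auto
qed

lemma reflect_min_le_iff:
  fixes r :: real
  assumes "r > 0"
  shows "(b - min c (b - r * u)) / r \<le> z \<longleftrightarrow> (b - c) / r \<le> z \<and> u \<le> z"
proof -
  have "(b - min c (b - r * u)) / r \<le> z \<longleftrightarrow> b - min c (b - r * u) \<le> r * z"
    using assms by (simp add: pos_divide_le_eq mult.commute)
  also have "\<dots> \<longleftrightarrow> b - c \<le> r * z \<and> r * u \<le> r * z"
    by (cases "c \<le> b - r * u") (simp_all only: min_def if_True if_False; linarith)+
  also have "\<dots> \<longleftrightarrow> (b - c) / r \<le> z \<and> u \<le> z"
    using assms by (simp add: pos_divide_le_eq mult.commute)
  finally show ?thesis .
qed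

text \<open>Solving the recursion exhibits \<open>X i\<close> as a measurable function of \<open>X 0\<close> and the noise
  up to time \<open>i\<close>.\<close>

primrec arma :: "real \<Rightarrow> real \<Rightarrow> real \<Rightarrow> (nat \<Rightarrow> real) \<Rightarrow> nat \<Rightarrow> real" where
  "arma r s x\<^sub>0 \<epsilon> 0 = x\<^sub>0"
| "arma r s x\<^sub>0 \<epsilon> (Suc i) = r * arma r s x\<^sub>0 \<epsilon> i + \<epsilon> (Suc i) + s * \<epsilon> i"

lemma arma_unique:
  assumes "\<And>i. i \<ge> 1 \<Longrightarrow> x i - r * x (i - 1) = \<epsilon> i + s * \<epsilon> (i - 1)"
  shows "x i = arma r s (x 0) \<epsilon> i"
proof (induction i)
  case (Suc i)
  with assms[of "Suc i"] show ?case
    by simp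
qed simp

lemma arma_cong: "(\<And>j. j \<le> i \<Longrightarrow> \<epsilon> j = \<epsilon>' j) \<Longrightarrow> arma r s x\<^sub>0 \<epsilon> i = arma r s x\<^sub>0 \<epsilon>' i"
  by (induction i) auto

lemma borel_measurable_arma:
  assumes [measurable]: "x\<^sub>0 \<in> borel_measurable N" "\<And>j. j \<le> i \<Longrightarrow> (\<lambda>\<omega>. \<epsilon> \<omega> j) \<in> borel_measurable N"
  shows "(\<lambda>\<omega>. arma r s (x\<^sub>0 \<omega>) (\<epsilon> \<omega>) i) \<in> borel_measurable N"
  using assms(2)
proof (induction i)
  case (Suc i)
  have [measurable]: "(\<lambda>\<omega>. \<epsilon> \<omega> i) \<in> borel_measurable N" "(\<lambda>\<omega>. \<epsilon> \<omega> (Suc i)) \<in> borel_measurable N"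
    using Suc.prems by auto
  have [measurable]: "(\<lambda>\<omega>. arma r s (x\<^sub>0 \<omega>) (\<epsilon> \<omega>) i) \<in> borel_measurable N"
    using Suc by simp
  show ?case
    by simp
qed simp

abbreviation past_space :: "nat \<Rightarrow> ((real \<times> real) \<times> (nat \<Rightarrow> real)) measure" where
  "past_space m \<equiv> (borel \<Otimes>\<^sub>M borel) \<Otimes>\<^sub>M PiM {1..m} (\<lambda>_. borel)"

text \<open>A point \<open>((x\<^sub>0, \<epsilon>\<^sub>0), \<epsilon>)\<close> of \<open>past_space m\<close> encodes the initial value, the initial noise
  and the noise at the times \<open>1, \<dots>, m\<close>.\<close>

definition past_noise :: "(real \<times> real) \<times> (nat \<Rightarrow> real) \<Rightarrow> nat \<Rightarrow> real" where
  "past_noise p j = (if j = 0 then snd (fst p) else snd p j)"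

definition past_arma :: "real \<Rightarrow> real \<Rightarrow> (real \<times> real) \<times> (nat \<Rightarrow> real) \<Rightarrow> nat \<Rightarrow> real" where
  "past_arma r s p i = arma r s (fst (fst p)) (past_noise p) i"

lemma past_noise_measurable: "j \<le> m \<Longrightarrow> (\<lambda>p. past_noise p j) \<in> borel_measurable (past_space m)"
  unfolding past_noise_def
  by (cases "j = 0") (auto intro!: measurable_compose[OF measurable_snd measurable_component_singleton])

lemma past_arma_measurable: "i \<le> m \<Longrightarrow> (\<lambda>p. past_arma r s p i) \<in> borel_measurable (past_space m)"
  unfolding past_arma_def by (intro borel_measurable_arma past_noise_measurable) auto

lemma past_arma_le_sets:
  "{p \<in> space (past_space m). \<forall>i\<in>{1..m}. past_arma r s p i \<le> x} \<in> sets (past_space m)"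
proof (intro sets.sets_Collect_finite_All)
  fix i :: nat assume "i \<in> {1..m}"
  then have [measurable]: "(\<lambda>p. past_arma r s p i) \<in> borel_measurable (past_space m)"
    by (intro past_arma_measurable) simp
  show "{p \<in> space (past_space m). past_arma r s p i \<le> x} \<in> sets (past_space m)"
    by measurable
qed simp

locale arma11 = prob_space M for M :: "'a measure" +
  fixes X e :: "nat \<Rightarrow> 'a \<Rightarrow> real" and f :: "real \<Rightarrow> real" and r s :: real
  assumes r_pos: "r > 0"
    and indep_noise: "indep_vars (\<lambda>_. borel) e UNIV"
    and noise_density: "\<And>i. distributed M lborel (e i) (\<lambda>t. ennreal (f t))"
    and density_nonneg: "\<And>t. f t \<ge> 0"
    and X0_measurable [measurable]: "X 0 \<in> borel_measurable M"
    and indep_initial: "indep_set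
           (sets (vimage_algebra (space M) (\<lambda>\<omega>. (X 0 \<omega>, e 0 \<omega>)) (borel \<Otimes>\<^sub>M borel)))
           (sets (vimage_algebra (space M) (\<lambda>\<omega>. restrict (\<lambda>i. e i \<omega>) {1..})
                   (PiM {1..} (\<lambda>_. borel))))"
    and recursion: "\<And>i \<omega>. i \<ge> 1 \<Longrightarrow> \<omega> \<in> space M \<Longrightarrow>
           X i \<omega> - r * X (i - 1) \<omega> = e i \<omega> + s * e (i - 1) \<omega>"
begin

lemma noise_measurable [measurable]: "e i \<in> borel_measurable M"
  using indep_noise by (auto simp: indep_vars_def2)

lemma X_eq_arma: "\<omega> \<in> space M \<Longrightarrow> X i \<omega> = arma r s (X 0 \<omega>) (\<lambda>j. e j \<omega>) i"
  using arma_unique[where x="\<lambda>i. X i \<omega>" and \<epsilon>="\<lambda>j. e j \<omega>"] recursion by blast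

lemma X_measurable [measurable]: "X i \<in> borel_measurable M"
  by (subst measurable_cong[OF X_eq_arma]) (auto intro: borel_measurable_arma)

definition past :: "nat \<Rightarrow> 'a \<Rightarrow> (real \<times> real) \<times> (nat \<Rightarrow> real)" where
  "past m \<omega> = ((X 0 \<omega>, e 0 \<omega>), restrict (\<lambda>i. e i \<omega>) {1..m})"

lemma past_in_space: "past m \<omega> \<in> space (past_space m)"
  by (simp add: past_def space_pair_measure space_PiM)

lemma past_noise_past: "j \<le> m \<Longrightarrow> past_noise (past m \<omega>) j = e j \<omega>"
  by (simp add: past_noise_def past_def)

lemma past_arma_past:
  assumes "\<omega> \<in> space M" "i \<le> m"
  shows "past_arma r s (past m \<omega>) i = X i \<omega>"
proof -
  have "fst (fst (past m \<omega>)) = X 0 \<omega>"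
    by (simp add: past_def)
  then show ?thesis
    unfolding X_eq_arma[OF assms(1), of i] past_arma_def using assms(2)
    by (auto intro!: arma_cong simp: past_noise_past)
qed

lemma indep_past_noise: "indep_rv (past_space m) (past m) borel (e (Suc m))"
  unfolding past_def
proof (rule indep_rv_pair_assoc)
  have "indep_rv (borel \<Otimes>\<^sub>M borel) (\<lambda>\<omega>. (X 0 \<omega>, e 0 \<omega>))
      (PiM {1..} (\<lambda>_. borel)) (\<lambda>\<omega>. restrict (\<lambda>i. e i \<omega>) {1..})"
    using indep_initial by (simp add: indep_rv_def measurable_restrict)
  from indep_rv_compose[OF this measurable_ident,
      of "\<lambda>w. (restrict w {1..m}, w (Suc m))" "PiM {1..m} (\<lambda>_. borel) \<Otimes>\<^sub>M borel"]
  show "indep_rv (borel \<Otimes>\<^sub>M borel) (\<lambda>\<omega>. (X 0 \<omega>, e 0 \<omega>))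
      (PiM {1..m} (\<lambda>_. borel) \<Otimes>\<^sub>M borel) (\<lambda>\<omega>. (restrict (\<lambda>i. e i \<omega>) {1..m}, e (Suc m) \<omega>))"
    by (auto intro!: measurable_Pair measurable_restrict_subset measurable_component_singleton
        simp: restrict_restrict Int_absorb1)
  have "indep_rv (PiM {1..m} (\<lambda>_. borel)) (\<lambda>\<omega>. restrict (\<lambda>i. e i \<omega>) {1..m})
      (PiM {Suc m} (\<lambda>_. borel)) (\<lambda>\<omega>. restrict (\<lambda>i. e i \<omega>) {Suc m})"
    by (simp add: indep_rv_iff_indep_var indep_var_restrict[OF indep_noise])
  from indep_rv_compose[OF this measurable_ident, of "\<lambda>w. w (Suc m)" borel]
  show "indep_rv (PiM {1..m} (\<lambda>_. borel)) (\<lambda>\<omega>. restrict (\<lambda>i. e i \<omega>) {1..m}) borel (e (Suc m))"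
    by (auto intro: measurable_component_singleton)
qed

lemma density_measurable [measurable]: "f \<in> borel_measurable borel"
proof -
  have "(\<lambda>t. ennreal (f t)) \<in> borel_measurable borel"
    using noise_density[of 0] by (simp add: distributed_def)
  then have "(\<lambda>t. enn2real (ennreal (f t))) \<in> borel_measurable borel"
    by measurable
  then show ?thesis
    by (simp add: density_nonneg)
qed

context
  fixes x y\<^sub>0 y\<^sub>1 :: real and m :: nat
begin

definition kernel :: "real \<Rightarrow> real \<Rightarrow> real" where
  "kernel z\<^sub>0 z\<^sub>1 = (if (min y\<^sub>0 x - s * z\<^sub>1 - y\<^sub>1) / r \<le> z\<^sub>0 then f (min y\<^sub>0 x - r * z\<^sub>0 - s * z\<^sub>1) else 0)"

definition max_le_event :: "'a set" where
  "max_le_event = {\<omega> \<in> space M. \<forall>i\<in>{1..m}. X i \<omega> \<le> x}"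

lemma kernel_nonneg: "kernel z\<^sub>0 z\<^sub>1 \<ge> 0"
  by (simp add: kernel_def density_nonneg)

lemma kernel_measurable [measurable]: "case_prod kernel \<in> borel_measurable (borel \<Otimes>\<^sub>M borel)"
  unfolding kernel_def by measurable

lemma max_le_event_measurable [measurable]: "max_le_event \<in> sets M"
  unfolding max_le_event_def by (intro sets.sets_Collect_finite_All) auto

lemma emeasure_Gfun_Suc_set:
  "emeasure M {\<omega> \<in> space M. run_max X (Suc m) \<omega> \<le> ereal x \<and> X (Suc m) \<omega> \<le> y\<^sub>0 \<and> e (Suc m) \<omega> \<le> y\<^sub>1}
   = (\<integral>\<^sup>+\<omega>. indicator max_le_event \<omega> *
        (\<integral>\<^sup>+t. ennreal (f t) * indicator {..min y\<^sub>1 (min y\<^sub>0 x - r * X m \<omega> - s * e m \<omega>)} t \<partial>lborel) \<partial>M)"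
proof -
  define D where "D = {p \<in> space (past_space m). \<forall>i\<in>{1..m}. past_arma r s p i \<le> x}"
  define c where "c p = min y\<^sub>1 (min y\<^sub>0 x - r * past_arma r s p m - s * past_noise p m)" for p
  define g where "g = (\<lambda>(p, t). if p \<in> D \<and> t \<le> c p then 1 else 0 :: ennreal)"
  have [measurable]: "D \<in> sets (past_space m)"
    unfolding D_def by (rule past_arma_le_sets)
  have [measurable]: "c \<in> borel_measurable (past_space m)"
    unfolding c_def using past_arma_measurable[of m m r s] past_noise_measurable[of m m] by measurable
  have g_measurable: "g \<in> borel_measurable (past_space m \<Otimes>\<^sub>M borel)"
    unfolding g_def by measurable
  have g_past: "g (past m \<omega>, t)
      = indicator max_le_event \<omega> * indicator {..min y\<^sub>1 (min y\<^sub>0 x - r * X m \<omega> - s * e m \<omega>)} t"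
    if "\<omega> \<in> space M" for \<omega> t
    using that past_in_space[of m \<omega>]
    by (auto simp: g_def D_def c_def max_le_event_def past_arma_past past_noise_past split: split_indicator)
  let ?E = "{\<omega> \<in> space M. run_max X (Suc m) \<omega> \<le> ereal x \<and> X (Suc m) \<omega> \<le> y\<^sub>0 \<and> e (Suc m) \<omega> \<le> y\<^sub>1}"
  have E_indicator: "indicator ?E \<omega> = g (past m \<omega>, e (Suc m) \<omega>)" if "\<omega> \<in> space M" for \<omega>
  proof -
    have "X (Suc m) \<omega> = r * X m \<omega> + e (Suc m) \<omega> + s * e m \<omega>"
      using recursion[of "Suc m" \<omega>] that by simp
    moreover have "{1..Suc m} = insert (Suc m) {1..m}"
      by auto
    ultimately show ?thesis
      using that by (auto simp: g_past run_max_le_iff max_le_event_def split: split_indicator)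
  qed
  have "?E \<in> sets M"
    unfolding run_max_le_iff by measurable
  then have "emeasure M ?E = (\<integral>\<^sup>+\<omega>. indicator ?E \<omega> \<partial>M)"
    by simp
  also have "\<dots> = (\<integral>\<^sup>+\<omega>. g (past m \<omega>, e (Suc m) \<omega>) \<partial>M)"
    by (intro nn_integral_cong E_indicator)
  also have "\<dots> = (\<integral>\<^sup>+\<omega>. \<integral>\<^sup>+t. ennreal (f t) * g (past m \<omega>, t) \<partial>lborel \<partial>M)"
    using indep_past_noise noise_density g_measurable by (rule nn_integral_indep_density)
  also have "\<dots> = (\<integral>\<^sup>+\<omega>. indicator max_le_event \<omega> *
        (\<integral>\<^sup>+t. ennreal (f t) * indicator {..min y\<^sub>1 (min y\<^sub>0 x - r * X m \<omega> - s * e m \<omega>)} t \<partial>lborel) \<partial>M)"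
    by (intro nn_integral_cong) (simp add: g_past nn_integral_cmult[symmetric] ac_simps)
  finally show ?thesis .
qed

lemma nn_integral_kernel_eq_Stieltjes:
  "(\<integral>\<^sup>+\<omega>. indicator {\<omega> \<in> max_le_event. X m \<omega> \<le> z\<^sub>0} \<omega> * ennreal (kernel z\<^sub>0 (e m \<omega>)) \<partial>M)
   = (\<integral>\<^sup>+z\<^sub>1. ennreal (kernel z\<^sub>0 z\<^sub>1) \<partial>interval_measure (Gfun M X e x m z\<^sub>0))"
proof -
  have "Gfun M X e x m z\<^sub>0 = (\<lambda>t. measure M {\<omega> \<in> space M. \<omega> \<in> {\<omega> \<in> max_le_event. X m \<omega> \<le> z\<^sub>0} \<and> e m \<omega> \<le> t})"
    by (auto simp: Gfun_def max_le_event_def run_max_le_iff intro!: arg_cong[where f="measure M"])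
  moreover have "{\<omega> \<in> max_le_event. X m \<omega> \<le> z\<^sub>0} \<in> sets M"
    by measurable
  moreover have "(\<lambda>z\<^sub>1. ennreal (kernel z\<^sub>0 z\<^sub>1)) \<in> borel_measurable borel"
    by measurable
  ultimately show ?thesis
    using nn_integral_indicator_eq_interval_measure[of "{\<omega> \<in> max_le_event. X m \<omega> \<le> z\<^sub>0}" "e m"
        "\<lambda>z\<^sub>1. ennreal (kernel z\<^sub>0 z\<^sub>1)"]
    by simp
qed

lemma indicator_kernel_measurable [measurable]:
  "(\<lambda>(z\<^sub>0, \<omega>). indicator {\<omega> \<in> max_le_event. X m \<omega> \<le> z\<^sub>0} \<omega> * ennreal (kernel z\<^sub>0 (e m \<omega>)))
     \<in> borel_measurable (borel \<Otimes>\<^sub>M M)"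
proof (subst measurable_cong)
  show "(\<lambda>(z\<^sub>0, \<omega>). indicator max_le_event \<omega> * (if X m \<omega> \<le> z\<^sub>0 then ennreal (kernel z\<^sub>0 (e m \<omega>)) else 0))
      \<in> borel_measurable (borel \<Otimes>\<^sub>M M)"
    by measurable
qed (auto split: split_indicator)

lemma Stieltjes_kernel_measurable [measurable]:
  "(\<lambda>z\<^sub>0. \<integral>\<^sup>+z\<^sub>1. ennreal (kernel z\<^sub>0 z\<^sub>1) \<partial>interval_measure (Gfun M X e x m z\<^sub>0)) \<in> borel_measurable borel"
  unfolding nn_integral_kernel_eq_Stieltjes[symmetric]
  by (rule borel_measurable_nn_integral) (simp add: indicator_kernel_measurable)

lemma nn_integral_density_atMost_eq_kernel:
  "(\<integral>\<^sup>+t. ennreal (f t) * indicator {..min y\<^sub>1 (min y\<^sub>0 x - r * X m \<omega> - s * e m \<omega>)} t \<partial>lborel)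
   = r * (\<integral>\<^sup>+z\<^sub>0. indicator {X m \<omega>..} z\<^sub>0 * ennreal (kernel z\<^sub>0 (e m \<omega>)) \<partial>lborel)"
proof -
  define b where "b = min y\<^sub>0 x - s * e m \<omega>"
  have "(b - min y\<^sub>1 (b - r * X m \<omega>)) / r \<le> z \<longleftrightarrow> (b - y\<^sub>1) / r \<le> z \<and> X m \<omega> \<le> z" for z
    using r_pos by (rule reflect_min_le_iff)
  then have "ennreal (f (b - r * z)) * indicator {(b - min y\<^sub>1 (b - r * X m \<omega>)) / r..} z
      = indicator {X m \<omega>..} z * ennreal (kernel z (e m \<omega>))" for z
    by (auto simp: kernel_def b_def algebra_simps split: split_indicator)
  moreover have "min y\<^sub>0 x - r * X m \<omega> - s * e m \<omega> = b - r * X m \<omega>"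
    by (simp add: b_def)
  ultimately show ?thesis
    using nn_integral_atMost_reflect[OF _ r_pos, of "\<lambda>t. ennreal (f t)" "min y\<^sub>1 (b - r * X m \<omega>)" b]
    by (simp only:) simp
qed

lemma nn_integral_reflect_kernel:
  "(\<integral>\<^sup>+\<omega>. indicator max_le_event \<omega> *
      (\<integral>\<^sup>+t. ennreal (f t) * indicator {..min y\<^sub>1 (min y\<^sub>0 x - r * X m \<omega> - s * e m \<omega>)} t \<partial>lborel) \<partial>M)
   = r * (\<integral>\<^sup>+z\<^sub>0. \<integral>\<^sup>+\<omega>. indicator {\<omega> \<in> max_le_event. X m \<omega> \<le> z\<^sub>0} \<omega> * ennreal (kernel z\<^sub>0 (e m \<omega>)) \<partial>M \<partial>lborel)"
proof -
  define F where "F z\<^sub>0 \<omega> = indicator {\<omega> \<in> max_le_event. X m \<omega> \<le> z\<^sub>0} \<omega> * ennreal (kernel z\<^sub>0 (e m \<omega>))" for z\<^sub>0 \<omega>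
  have F_measurable [measurable]: "case_prod F \<in> borel_measurable (lborel \<Otimes>\<^sub>M M)"
    unfolding F_def using indicator_kernel_measurable
    by (simp add: measurable_cong_sets[OF sets_pair_measure_cong[OF sets_lborel refl] refl])
  have "(\<integral>\<^sup>+\<omega>. indicator max_le_event \<omega> *
      (\<integral>\<^sup>+t. ennreal (f t) * indicator {..min y\<^sub>1 (min y\<^sub>0 x - r * X m \<omega> - s * e m \<omega>)} t \<partial>lborel) \<partial>M)
      = (\<integral>\<^sup>+\<omega>. r * (\<integral>\<^sup>+z\<^sub>0. F z\<^sub>0 \<omega> \<partial>lborel) \<partial>M)"
  proof (intro nn_integral_cong)
    fix \<omega>
    have "F z\<^sub>0 \<omega> = indicator max_le_event \<omega> * (indicator {X m \<omega>..} z\<^sub>0 * ennreal (kernel z\<^sub>0 (e m \<omega>)))" for z\<^sub>0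
      by (simp add: F_def split: split_indicator)
    then have "(\<integral>\<^sup>+z\<^sub>0. F z\<^sub>0 \<omega> \<partial>lborel)
        = indicator max_le_event \<omega> * (\<integral>\<^sup>+z\<^sub>0. indicator {X m \<omega>..} z\<^sub>0 * ennreal (kernel z\<^sub>0 (e m \<omega>)) \<partial>lborel)"
      by (simp add: nn_integral_cmult)
    then show "indicator max_le_event \<omega> *
        (\<integral>\<^sup>+t. ennreal (f t) * indicator {..min y\<^sub>1 (min y\<^sub>0 x - r * X m \<omega> - s * e m \<omega>)} t \<partial>lborel)
      = r * (\<integral>\<^sup>+z\<^sub>0. F z\<^sub>0 \<omega> \<partial>lborel)"
      by (simp add: nn_integral_density_atMost_eq_kernel mult_ac)
  qed
  also have "\<dots> = r * (\<integral>\<^sup>+\<omega>. \<integral>\<^sup>+z\<^sub>0. F z\<^sub>0 \<omega> \<partial>lborel \<partial>M)"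
    by (rule nn_integral_cmult) measurable
  also have "(\<integral>\<^sup>+\<omega>. \<integral>\<^sup>+z\<^sub>0. F z\<^sub>0 \<omega> \<partial>lborel \<partial>M) = (\<integral>\<^sup>+z\<^sub>0. \<integral>\<^sup>+\<omega>. F z\<^sub>0 \<omega> \<partial>M \<partial>lborel)"
    by (rule pair_sigma_finite.Fubini'[OF _ F_measurable]) unfold_locales
  finally show ?thesis
    unfolding F_def .
qed

lemma Gfun_Suc_eq_Kop: "Gfun M X e x (Suc m) y\<^sub>0 y\<^sub>1 = Kop r s f x (Gfun M X e x m) y\<^sub>0 y\<^sub>1"
proof -
  let ?I = "\<lambda>z\<^sub>0. \<integral>\<^sup>+z\<^sub>1. ennreal (kernel z\<^sub>0 z\<^sub>1) \<partial>interval_measure (Gfun M X e x m z\<^sub>0)"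
  let ?E = "{\<omega> \<in> space M. run_max X (Suc m) \<omega> \<le> ereal x \<and> X (Suc m) \<omega> \<le> y\<^sub>0 \<and> e (Suc m) \<omega> \<le> y\<^sub>1}"
  have E: "emeasure M ?E = r * (\<integral>\<^sup>+z\<^sub>0. ?I z\<^sub>0 \<partial>lborel)"
    by (simp add: emeasure_Gfun_Suc_set nn_integral_reflect_kernel nn_integral_kernel_eq_Stieltjes)
  then have finite: "(\<integral>\<^sup>+z\<^sub>0. ?I z\<^sub>0 \<partial>lborel) \<noteq> \<infinity>"
    using r_pos by (auto simp: emeasure_eq_measure ennreal_mult_eq_top_iff)
  have inner: "(LINT z\<^sub>1|interval_measure (Gfun M X e x m z\<^sub>0). kernel z\<^sub>0 z\<^sub>1) = enn2real (?I z\<^sub>0)" for z\<^sub>0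
    by (rule integral_eq_nn_integral) (auto simp: kernel_nonneg cong: measurable_cong_sets)
  have "Kop r s f x (Gfun M X e x m) y\<^sub>0 y\<^sub>1 = r * (LINT z\<^sub>0|lborel. enn2real (?I z\<^sub>0))"
    by (simp add: Kop_def kernel_def[symmetric] inner)
  also have "\<dots> = r * enn2real (\<integral>\<^sup>+z\<^sub>0. ?I z\<^sub>0 \<partial>lborel)"
    using finite by (simp add: integral_enn2real)
  also have "\<dots> = Gfun M X e x (Suc m) y\<^sub>0 y\<^sub>1"
    using E r_pos by (simp add: Gfun_def measure_def enn2real_mult)
  finally show ?thesis ..
qed

end

end

theorem theorem2p1:
  fixes M :: "'a measure" and X e :: "nat \<Rightarrow> 'a \<Rightarrow> real"
    and F f :: "real \<Rightarrow> real" and r s x :: real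
  assumes "prob_space M"
    and "r > 0"
    and "prob_space.indep_vars M (\<lambda>_. borel) e UNIV"
    and "\<And>i. distributed M lborel (e i) (\<lambda>t. ennreal (f t))"
    and "\<And>t. f t \<ge> 0"
    and "\<And>i t. F t = measure M {\<omega> \<in> space M. e i \<omega> \<le> t}"
    and "X 0 \<in> borel_measurable M"
    and "prob_space.indep_set M
           (sets (vimage_algebra (space M) (\<lambda>\<omega>. (X 0 \<omega>, e 0 \<omega>)) (borel \<Otimes>\<^sub>M borel)))
           (sets (vimage_algebra (space M) (\<lambda>\<omega>. restrict (\<lambda>i. e i \<omega>) {1..})
                   (PiM {1..} (\<lambda>_. borel))))"
    and "\<And>i \<omega>. i \<ge> 1 \<Longrightarrow> \<omega> \<in> space M \<Longrightarrow>
           X i \<omega> - r * X (i - 1) \<omega> = e i \<omega> + s * e (i - 1) \<omega>"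
    and "n \<ge> 1"
  shows "Gfun M X e x n y0 y1 = Kop r s f x (Gfun M X e x (n - 1)) y0 y1"
proof -
  interpret arma11 M X e f r s
    using assms(1-5,7-9) by (simp add: arma11_def arma11_axioms_def)
  obtain m where "n = Suc m"
    using \<open>n \<ge> 1\<close> by (cases n) auto
  then show ?thesis
    by (simp add: Gfun_Suc_eq_Kop)
qed

end
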